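(* Let $A$ be a Heffter array $H(n;k)$ in which the entries of each row and each column sum (as integers) to $2nk+1$. Suppose there exist two sets of cells $H_1$ and $H_2$, each forming a Hamilton cycle, which are disjoint from each other and from the filled cells of $A$. Then there exists a Heffter array $H(n;k+4)$ whose rows and columns all sum (as integers) to $2n(k+4)+1$, and whose filled cells are precisely the filled cells of $A$ together with the cells of $H_1$ and $H_2$.
   Context: A Heffter array $H(n;k)$ is an $n\times n$ array in which some cells are filled with nonzero integers and the others are empty, such that: each row and each column contains exactly $k$ filled cells; the entries of every row and of every column sum to $0$ modulo $2nk+1$; and for each integer $1\le x\le nk$, exactly one of $x$ or $-x$ appears in the array, and it appears exactly once. Cells of an $n\times n$ array are identified with edges of $K_{n,n}$ (cell $(i,j)$ ↔ edge $\{a_i,b_j\}$); a set of cells forms a Hamilton cycle if the corresponding edge set is a single cycle of length $2n$. *)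

theory Defs
  imports Main
begin

text \<open>An n x n partially filled array is modelled as a function
  A :: nat => nat => int on the index range {0..<n} x {0..<n}; a cell is empty
  iff its value is 0 (entries of a Heffter array are nonzero). Values outside
  the index range are irrelevant.\<close>

definition filled_cells :: "nat \<Rightarrow> (nat \<Rightarrow> nat \<Rightarrow> int) \<Rightarrow> (nat \<times> nat) set" where
  "filled_cells n A = {(i, j). i < n \<and> j < n \<and> A i j \<noteq> 0}"

definition heffter :: "nat \<Rightarrow> nat \<Rightarrow> (nat \<Rightarrow> nat \<Rightarrow> int) \<Rightarrow> bool" where
  "heffter n k A \<longleftrightarrow>
     (\<forall>i<n. card {j. j < n \<and> A i j \<noteq> 0} = k) \<and>
     (\<forall>j<n. card {i. i < n \<and> A i j \<noteq> 0} = k) \<and>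
     (\<forall>i<n. (\<Sum>j<n. A i j) mod (2 * int n * int k + 1) = 0) \<and>
     (\<forall>j<n. (\<Sum>i<n. A i j) mod (2 * int n * int k + 1) = 0) \<and>
     (\<forall>x::int. 1 \<le> x \<and> x \<le> int n * int k \<longrightarrow>
        card {(i, j). (i, j) \<in> filled_cells n A \<and> \<bar>A i j\<bar> = x} = 1)"

definition integer_sums :: "nat \<Rightarrow> (nat \<Rightarrow> nat \<Rightarrow> int) \<Rightarrow> int \<Rightarrow> bool" where
  "integer_sums n A s \<longleftrightarrow>
     (\<forall>i<n. (\<Sum>j<n. A i j) = s) \<and> (\<forall>j<n. (\<Sum>i<n. A i j) = s)"

text \<open>A set C of cells (cell (i,j) = edge {a_i, b_j} of K_{n,n}) is a Hamilton
  cycle: its edges form the cycle a_{r 0} b_{c 0} a_{r 1} b_{c 1} ... a_{r (n-1)} b_{c (n-1)} a_{r 0}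
  through all 2n vertices, of length 2n (the card condition ensures the 2n edges are
  distinct, i.e. it is a genuine cycle).\<close>
definition hamilton_cycle :: "nat \<Rightarrow> (nat \<times> nat) set \<Rightarrow> bool" where
  "hamilton_cycle n C \<longleftrightarrow>
     (\<exists>r c. bij_betw r {..<n} {..<n} \<and> bij_betw c {..<n} {..<n} \<and>
        C = (\<lambda>t. (r t, c t)) ` {..<n} \<union> (\<lambda>t. (r (Suc t mod n), c t)) ` {..<n} \<and>
        card C = 2 * n)"

end

theory Submission
  imports Defs
begin

text \<open>
  Write N = nk. The new array is B = L1 + L2 - A, where L1 and L2 label the cells of the two
  Hamilton cycles with the values N+1, ..., N+2n and N+2n+1, ..., N+4n. A cycle through
  a(r 0), b(c 0), a(r 1), b(c 1), ... consists of the cells (r t, c t), labelled f t, and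
  (r (t+1), c t), labelled g t. Column c t then sums to f t + g t and row r (t+1) to
  f (t+1) + g t. For the first cycle take f t = N+1+t, g t = N+2n-t; for the second
  f t = N+3n-t, g t = N+3n+1+t. Both sums are then constant, except in the wrap-around row r 0,
  where the first labelling falls short by n and the second exceeds by n. Rotating both cycles to
  start in the same row makes these defects cancel, so every line of L1 + L2 sums to 4N+8n+2,
  and subtracting A (line sums 2N+1) leaves 2N+8n+1 = 2n(k+4)+1. The absolute values of B are
  those of A on its filled cells, i.e. 1, ..., N, followed by N+1, ..., N+4n on the cycles.
\<close>

lemma sum_of_bool_lessThan:
  "(\<Sum>j<n. of_bool (P j)) = int (card {j. j < (n::nat) \<and> P j})"
proof -
  have "{j. j < n \<and> P j} = {..<n} \<inter> {j. P j}"
    by auto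
  then show ?thesis
    by simp
qed

lemma bij_betw_image_factor:
  assumes "inj_on d S" "inj_on f S" "\<And>t. t \<in> S \<Longrightarrow> \<phi> (d t) = f t"
  shows "bij_betw \<phi> (d ` S) (f ` S)"
proof -
  have "bij_betw (\<phi> \<circ> d) S (f ` S) \<longleftrightarrow> bij_betw f S (f ` S)"
    by (rule bij_betw_cong) (simp add: assms(3))
  then have "bij_betw (\<phi> \<circ> d) S (f ` S)"
    using inj_on_imp_bij_betw[OF assms(2)] by simp
  then show ?thesis
    by (rule bij_betw_comp_iff[OF inj_on_imp_bij_betw[OF assms(1)], THEN iffD2])
qed

lemma card_preimage_eq_1:
  assumes "bij_betw f S T" "x \<in> T"
  shows "card {z \<in> S. f z = x} = 1"
proof -
  obtain z where z: "z \<in> S" "f z = x"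
    using assms by (auto simp: bij_betw_def)
  then have "{z \<in> S. f z = x} = {z}"
    using assms(1) by (auto simp: bij_betw_def inj_on_def)
  then show ?thesis
    by simp
qed

lemma add_mod_add_diff_mod:
  fixes a s n :: nat
  assumes "s \<le> n" "a < n"
  shows "((a + s) mod n + (n - s)) mod n = a"
proof -
  have "((a + s) mod n + (n - s)) mod n = (a + s + (n - s)) mod n"
    by (rule mod_add_left_eq)
  also have "a + s + (n - s) = a + n"
    using assms(1) by simp
  finally show ?thesis
    using assms(2) by simp
qed

lemma bij_betw_add_mod:
  fixes s n :: nat
  assumes "s < n" shows "bij_betw (\<lambda>t. (t + s) mod n) {..<n} {..<n}"
proof (rule bij_betw_byWitness[where f' = "\<lambda>t. (t + (n - s)) mod n"])
  show "\<forall>a\<in>{..<n}. ((a + s) mod n + (n - s)) mod n = a"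
    using assms add_mod_add_diff_mod[of s n] by simp
  show "\<forall>a\<in>{..<n}. ((a + (n - s)) mod n + s) mod n = a"
    using assms add_mod_add_diff_mod[of "n - s" n] by simp
qed (use assms in auto)

lemma image_add_int_lessThan: "(\<lambda>t. a + int t) ` {..<n} = {a..<a + int n}"
proof -
  have "x \<in> (\<lambda>t. a + int t) ` {..<n}" if "a \<le> x" "x < a + int n" for x
    using that by (intro image_eqI[of x _ "nat (x - a)"]) auto
  then show ?thesis
    by auto
qed

lemma image_diff_int_lessThan: "(\<lambda>t. b - int t) ` {..<n} = {b - int n<..b}"
proof -
  have "x \<in> (\<lambda>t. b - int t) ` {..<n}" if "b - int n < x" "x \<le> b" for x
    using that by (intro image_eqI[of x _ "nat (b - x)"]) auto
  then show ?thesis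
    by auto
qed

section \<open>Labelled Hamilton cycles of K(n,n)\<close>

definition cycle_cells :: "nat \<Rightarrow> (nat \<Rightarrow> nat) \<Rightarrow> (nat \<Rightarrow> nat) \<Rightarrow> (nat \<times> nat) set" where
  "cycle_cells n r c = (\<lambda>t. (r t, c t)) ` {..<n} \<union> (\<lambda>t. (r (Suc t mod n), c t)) ` {..<n}"

text \<open>Only meaningful in columns j < n: elsewhere inv_into returns an arbitrary index.\<close>

definition cycle_labelling ::
    "nat \<Rightarrow> (nat \<Rightarrow> nat) \<Rightarrow> (nat \<Rightarrow> nat) \<Rightarrow> (nat \<Rightarrow> int) \<Rightarrow> (nat \<Rightarrow> int) \<Rightarrow> nat \<Rightarrow> nat \<Rightarrow> int" where
  "cycle_labelling n r c f g i j =
     (let t = inv_into {..<n} c j in if i = r t then f t else if i = r (Suc t mod n) then g t else 0)"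

lemma hamilton_cycle_iff_cycle_cells:
  "hamilton_cycle n C \<longleftrightarrow>
     (\<exists>r c. bij_betw r {..<n} {..<n} \<and> bij_betw c {..<n} {..<n} \<and>
        C = cycle_cells n r c \<and> card C = 2 * n)"
  unfolding hamilton_cycle_def cycle_cells_def ..

locale cycle_param =
  fixes n :: nat and r c :: "nat \<Rightarrow> nat"
  assumes bij_r: "bij_betw r {..<n} {..<n}" and bij_c: "bij_betw c {..<n} {..<n}"
    and two_le_n: "2 \<le> n"
begin

lemma r_less: "t < n \<Longrightarrow> r t < n" and c_less: "t < n \<Longrightarrow> c t < n"
  using bij_betwE[OF bij_r] bij_betwE[OF bij_c] by simp_all

lemma r_Suc_mod_less: "r (Suc t mod n) < n"
  using r_less two_le_n by simp

lemma r_eq_iff: "s < n \<Longrightarrow> t < n \<Longrightarrow> r s = r t \<longleftrightarrow> s = t"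
  and c_eq_iff: "s < n \<Longrightarrow> t < n \<Longrightarrow> c s = c t \<longleftrightarrow> s = t"
  by (simp_all add: inj_on_eq_iff[OF bij_betw_imp_inj_on[OF bij_r]]
      inj_on_eq_iff[OF bij_betw_imp_inj_on[OF bij_c]])

lemma r_surjE:
  assumes "i < n" obtains u where "u < n" "i = r u"
proof -
  have "i \<in> r ` {..<n}"
    using assms bij_r by (simp add: bij_betw_def)
  then show thesis
    using that by blast
qed

lemma c_surjE:
  assumes "j < n" obtains t where "t < n" "j = c t"
proof -
  have "j \<in> c ` {..<n}"
    using assms bij_c by (simp add: bij_betw_def)
  then show thesis
    using that by blast
qed

lemma r_Suc_mod_neq:
  assumes "t < n" shows "r (Suc t mod n) \<noteq> r t"
proof -
  have "Suc t mod n \<noteq> t"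
    using assms two_le_n by (cases "Suc t = n") auto
  then show ?thesis
    using assms two_le_n by (simp add: r_eq_iff)
qed

lemma cycle_labelling_col:
  assumes "t < n"
  shows "cycle_labelling n r c f g i (c t) =
           (if i = r t then f t else 0) + (if i = r (Suc t mod n) then g t else 0)"
  using assms r_Suc_mod_neq[OF assms] bij_c
  by (simp add: cycle_labelling_def bij_betw_imp_inj_on)

lemma cycle_labelling_diag: "t < n \<Longrightarrow> cycle_labelling n r c f g (r t) (c t) = f t"
  by (simp add: cycle_labelling_col r_Suc_mod_neq[THEN not_sym])

lemma cycle_labelling_subdiag:
  "t < n \<Longrightarrow> cycle_labelling n r c f g (r (Suc t mod n)) (c t) = g t"
  by (simp add: cycle_labelling_col r_Suc_mod_neq)

lemma mem_cycle_cells_col: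
  assumes "t < n"
  shows "(i, c t) \<in> cycle_cells n r c \<longleftrightarrow> i = r t \<or> i = r (Suc t mod n)"
  using assms by (auto simp: cycle_cells_def c_eq_iff)

lemma cycle_cells_subset: "cycle_cells n r c \<subseteq> {..<n} \<times> {..<n}"
  by (auto simp: cycle_cells_def r_less c_less r_Suc_mod_less)

lemma cycle_labelling_outside:
  assumes "j < n" "(i, j) \<notin> cycle_cells n r c"
  shows "cycle_labelling n r c f g i j = 0"
proof -
  obtain t where "t < n" "j = c t"
    using assms(1) by (rule c_surjE)
  then show ?thesis
    using assms(2) by (simp add: cycle_labelling_col mem_cycle_cells_col)
qed

lemma cycle_labelling_col_sum:
  assumes "\<And>t. t < n \<Longrightarrow> f t + g t = s" and "j < n"
  shows "(\<Sum>i<n. cycle_labelling n r c f g i j) = s"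
proof -
  obtain t where t: "t < n" "j = c t" using assms(2) by (rule c_surjE)
  then show ?thesis
    using assms(1) r_less r_Suc_mod_less by (simp add: cycle_labelling_col sum.distrib)
qed

lemma cycle_labelling_row_sum:
  assumes "\<And>t. Suc t < n \<Longrightarrow> f (Suc t) + g t = s" and "i < n"
  shows "(\<Sum>j<n. cycle_labelling n r c f g i j) = (if i = r 0 then f 0 + g (n - 1) else s)"
proof -
  obtain u where u: "u < n" "i = r u" using assms(2) by (rule r_surjE)
  define v where "v = (if u = 0 then n - 1 else u - 1)"
  have v: "v < n"
    using u(1) by (auto simp: v_def)
  have "(\<Sum>j<n. cycle_labelling n r c f g i j) = (\<Sum>t<n. cycle_labelling n r c f g i (c t))"
    by (rule sum.reindex_bij_betw[OF bij_c, symmetric])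
  also have "\<dots> = (\<Sum>t<n. if t = u then f t else 0) + (\<Sum>t<n. if t = v then g t else 0)"
  proof -
    have "\<And>t. t < n \<Longrightarrow> i = r t \<longleftrightarrow> t = u"
      using u by (auto simp: r_eq_iff)
    moreover have "\<And>t. t < n \<Longrightarrow> i = r (Suc t mod n) \<longleftrightarrow> t = v"
    proof -
      fix t assume "t < n"
      have "Suc t mod n < n"
        using two_le_n by simp
      then have "i = r (Suc t mod n) \<longleftrightarrow> Suc t mod n = u"
        using u r_eq_iff by metis
      also have "\<dots> \<longleftrightarrow> t = v"
        using \<open>t < n\<close> u(1) by (auto simp: v_def mod_Suc)
      finally show "i = r (Suc t mod n) \<longleftrightarrow> t = v" .
    qed
    ultimately show ?thesis
      by (simp add: cycle_labelling_col sum.distrib)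
  qed
  also have "\<dots> = f u + g v"
    using u v by simp
  finally have "(\<Sum>j<n. cycle_labelling n r c f g i j) = f u + g v" .
  moreover have "u \<noteq> 0 \<Longrightarrow> i \<noteq> r 0 \<and> f u + g v = s"
    using u assms(1)[of v] two_le_n by (simp add: v_def r_eq_iff)
  ultimately show ?thesis
    using u by (cases "u = 0") (simp_all add: v_def)
qed

lemma cycle_labelling_one:
  assumes "j < n"
  shows "cycle_labelling n r c (\<lambda>_. 1) (\<lambda>_. 1) i j = of_bool ((i, j) \<in> cycle_cells n r c)"
proof -
  obtain t where "t < n" "j = c t" using assms by (rule c_surjE)
  then show ?thesis
    using r_Suc_mod_neq[of t] by (simp add: cycle_labelling_col mem_cycle_cells_col)
qed

lemma cycle_cells_row_card:
  assumes "i < n" shows "card {j. j < n \<and> (i, j) \<in> cycle_cells n r c} = 2"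
proof -
  have "int (card {j. j < n \<and> (i, j) \<in> cycle_cells n r c}) =
          (\<Sum>j<n. cycle_labelling n r c (\<lambda>_. 1) (\<lambda>_. 1) i j)"
    by (simp add: sum_of_bool_lessThan[symmetric] cycle_labelling_one)
  also have "\<dots> = 2"
    using cycle_labelling_row_sum[of "\<lambda>_. 1" "\<lambda>_. 1" 2, OF _ assms] by simp
  finally show ?thesis by simp
qed

lemma cycle_cells_col_card:
  assumes "j < n" shows "card {i. i < n \<and> (i, j) \<in> cycle_cells n r c} = 2"
proof -
  have "int (card {i. i < n \<and> (i, j) \<in> cycle_cells n r c}) =
          (\<Sum>i<n. cycle_labelling n r c (\<lambda>_. 1) (\<lambda>_. 1) i j)"
    using assms by (simp add: cycle_labelling_one sum_of_bool_lessThan[symmetric])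
  also have "\<dots> = 2"
    using cycle_labelling_col_sum[of "\<lambda>_. 1" "\<lambda>_. 1" 2, OF _ assms] by simp
  finally show ?thesis by simp
qed

lemma cycle_labelling_bij:
  assumes "inj_on f {..<n}" "inj_on g {..<n}" "f ` {..<n} \<inter> g ` {..<n} = {}"
  shows "bij_betw (\<lambda>(i, j). cycle_labelling n r c f g i j) (cycle_cells n r c)
           (f ` {..<n} \<union> g ` {..<n})"
  unfolding cycle_cells_def
proof (rule bij_betw_combine)
  show "bij_betw (\<lambda>(i, j). cycle_labelling n r c f g i j) ((\<lambda>t. (r t, c t)) ` {..<n}) (f ` {..<n})"
    by (rule bij_betw_image_factor[OF _ assms(1)]) (simp_all add: inj_on_def c_eq_iff cycle_labelling_diag)
  show "bij_betw (\<lambda>(i, j). cycle_labelling n r c f g i j)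
          ((\<lambda>t. (r (Suc t mod n), c t)) ` {..<n}) (g ` {..<n})"
    by (rule bij_betw_image_factor[OF _ assms(2)]) (simp_all add: inj_on_def c_eq_iff cycle_labelling_subdiag)
qed (fact assms(3))

end

lemma cycle_cells_rotate:
  assumes "s < n"
  shows "cycle_cells n (r \<circ> (\<lambda>t. (t + s) mod n)) (c \<circ> (\<lambda>t. (t + s) mod n)) = cycle_cells n r c"
proof -
  have shift: "(\<lambda>t. (t + s) mod n) ` {..<n} = {..<n}"
    using bij_betw_add_mod[OF assms] by (simp add: bij_betw_def)
  have "\<And>t. (Suc t mod n + s) mod n = Suc ((t + s) mod n) mod n"
    by (simp add: mod_add_left_eq mod_Suc_eq)
  then have "cycle_cells n (r \<circ> (\<lambda>t. (t + s) mod n)) (c \<circ> (\<lambda>t. (t + s) mod n)) =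
      (\<lambda>t. (r t, c t)) ` ((\<lambda>t. (t + s) mod n) ` {..<n}) \<union>
      (\<lambda>t. (r (Suc t mod n), c t)) ` ((\<lambda>t. (t + s) mod n) ` {..<n})"
    by (simp add: cycle_cells_def image_image)
  then show ?thesis
    by (simp add: shift cycle_cells_def)
qed

lemma hamilton_cycleE:
  assumes "hamilton_cycle n C" "i0 < n"
  obtains r c where "cycle_param n r c" "C = cycle_cells n r c" "r 0 = i0"
proof -
  obtain r c where r: "bij_betw r {..<n} {..<n}" and c: "bij_betw c {..<n} {..<n}"
    and C: "C = cycle_cells n r c" and card_C: "card C = 2 * n"
    using assms(1) by (auto simp: hamilton_cycle_iff_cycle_cells)
  have "2 \<le> n"
  proof (rule ccontr)
    assume "\<not> 2 \<le> n"
    then have "n = 1"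
      using assms(2) by simp
    then have "C = {(r 0, c 0)}"
      using C by (auto simp: cycle_cells_def)
    then show False
      using card_C \<open>n = 1\<close> by simp
  qed
  obtain s where s: "s < n" "r s = i0"
    using assms(2) r by (metis bij_betw_iff_bijections lessThan_iff)
  define h where "h = (\<lambda>t. (t + s) mod n)"
  have "cycle_param n (r \<circ> h) (c \<circ> h)"
    using \<open>2 \<le> n\<close> bij_betw_trans[OF bij_betw_add_mod[OF s(1)] r]
      bij_betw_trans[OF bij_betw_add_mod[OF s(1)] c]
    by unfold_locales (simp_all add: h_def)
  moreover have "C = cycle_cells n (r \<circ> h) (c \<circ> h)"
    using C cycle_cells_rotate s(1) by (simp add: h_def)
  moreover have "(r \<circ> h) 0 = i0"
    using s by (simp add: h_def)
  ultimately show thesis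
    by (rule that)
qed

lemma filled_cells_eq_Sigma:
  "filled_cells n A = (SIGMA i:{..<n}. {j. j < n \<and> A i j \<noteq> 0})"
  by (auto simp: filled_cells_def)

lemma finite_filled_cells: "finite (filled_cells n A)"
  by (simp add: filled_cells_eq_Sigma)

lemma card_filled_cells:
  assumes "heffter n k A" shows "card (filled_cells n A) = n * k"
  using assms by (simp add: filled_cells_eq_Sigma heffter_def)

lemma heffter_value_set_eq:
  "{(i, j). (i, j) \<in> filled_cells n A \<and> \<bar>A i j\<bar> = x} =
     {z \<in> filled_cells n A. (\<lambda>(i, j). \<bar>A i j\<bar>) z = x}"
  by auto

lemma heffter_abs_bij:
  assumes "heffter n k A"
  shows "bij_betw (\<lambda>(i, j). \<bar>A i j\<bar>) (filled_cells n A) {1..int n * int k}"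
proof -
  let ?F = "filled_cells n A" and ?v = "\<lambda>(i, j). \<bar>A i j\<bar>" and ?T = "{1..int n * int k}"
  have "?T \<subseteq> ?v ` ?F"
  proof
    fix x assume "x \<in> ?T"
    then have "card {z \<in> ?F. ?v z = x} = 1"
      using assms by (simp add: heffter_def heffter_value_set_eq)
    then obtain z where "{z \<in> ?F. ?v z = x} = {z}"
      by (rule card_1_singletonE)
    then have "z \<in> {z \<in> ?F. ?v z = x}"
      by simp
    then show "x \<in> ?v ` ?F"
      by (auto intro: rev_image_eqI)
  qed
  moreover have "card ?T = card ?F"
    using assms by (simp add: card_filled_cells nat_mult_distrib)
  ultimately have card_image: "card (?v ` ?F) = card ?F"
    using card_mono[of "?v ` ?F" ?T] card_image_le[of ?F ?v] finite_filled_cells by simp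
  then have "inj_on ?v ?F"
    using finite_filled_cells by (simp add: inj_on_iff_eq_card)
  moreover have "?v ` ?F = ?T"
    using card_subset_eq[of "?v ` ?F" ?T] \<open>?T \<subseteq> ?v ` ?F\<close> \<open>card ?T = card ?F\<close> card_image
      finite_filled_cells by simp
  ultimately show ?thesis
    by (simp add: bij_betw_def)
qed

lemma heffterI:
  assumes "\<And>i. i < n \<Longrightarrow> card {j. j < n \<and> A i j \<noteq> 0} = k"
    and "\<And>j. j < n \<Longrightarrow> card {i. i < n \<and> A i j \<noteq> 0} = k"
    and "integer_sums n A (2 * int n * int k + 1)"
    and "bij_betw (\<lambda>(i, j). \<bar>A i j\<bar>) (filled_cells n A) {1..int n * int k}"
  shows "heffter n k A"
  using assms card_preimage_eq_1[OF assms(4)]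
  by (simp add: heffter_def integer_sums_def heffter_value_set_eq)

section \<open>Adjoining two Hamilton cycles to a Heffter array\<close>

locale heffter_extension =
  C1: cycle_param n r1 c1 + C2: cycle_param n r2 c2
  for n :: nat and r1 c1 r2 c2 :: "nat \<Rightarrow> nat" +
  fixes k :: nat and A :: "nat \<Rightarrow> nat \<Rightarrow> int"
  assumes heffter_A: "heffter n k A"
    and sums_A: "integer_sums n A (2 * int n * int k + 1)"
    and same_start: "r1 0 = r2 0"
    and cycles_disjoint: "cycle_cells n r1 c1 \<inter> cycle_cells n r2 c2 = {}"
    and cycle1_unfilled: "cycle_cells n r1 c1 \<inter> filled_cells n A = {}"
    and cycle2_unfilled: "cycle_cells n r2 c2 \<inter> filled_cells n A = {}"
begin

definition N :: int where "N = int n * int k"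

definition L1 :: "nat \<Rightarrow> nat \<Rightarrow> int" where
  "L1 = cycle_labelling n r1 c1 (\<lambda>t. N + 1 + int t) (\<lambda>t. N + 2 * int n - int t)"

definition L2 :: "nat \<Rightarrow> nat \<Rightarrow> int" where
  "L2 = cycle_labelling n r2 c2 (\<lambda>t. N + 3 * int n - int t) (\<lambda>t. N + 3 * int n + 1 + int t)"

definition B :: "nat \<Rightarrow> nat \<Rightarrow> int" where
  "B i j = L1 i j + L2 i j - A i j"

lemma A_zero_on_cycles:
  "(i, j) \<in> cycle_cells n r1 c1 \<union> cycle_cells n r2 c2 \<Longrightarrow> A i j = 0"
  using cycle1_unfilled cycle2_unfilled C1.cycle_cells_subset C2.cycle_cells_subset
  by (auto simp: filled_cells_def)

lemma B_on_cycle1: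
  assumes "(i, j) \<in> cycle_cells n r1 c1" shows "B i j = L1 i j"
proof -
  have "j < n" "(i, j) \<notin> cycle_cells n r2 c2"
    using assms C1.cycle_cells_subset cycles_disjoint by auto
  then show ?thesis
    using assms A_zero_on_cycles by (simp add: B_def L2_def C2.cycle_labelling_outside)
qed

lemma B_on_cycle2:
  assumes "(i, j) \<in> cycle_cells n r2 c2" shows "B i j = L2 i j"
proof -
  have "j < n" "(i, j) \<notin> cycle_cells n r1 c1"
    using assms C2.cycle_cells_subset cycles_disjoint by auto
  then show ?thesis
    using assms A_zero_on_cycles by (simp add: B_def L1_def C1.cycle_labelling_outside)
qed

lemma B_off_cycles:
  assumes "j < n" "(i, j) \<notin> cycle_cells n r1 c1" "(i, j) \<notin> cycle_cells n r2 c2"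
  shows "B i j = - A i j"
  using assms by (simp add: B_def L1_def L2_def C1.cycle_labelling_outside C2.cycle_labelling_outside)

lemma L1_bij: "bij_betw (\<lambda>(i, j). L1 i j) (cycle_cells n r1 c1) {N + 1..N + 2 * int n}"
proof -
  have "(\<lambda>t. N + 1 + int t) ` {..<n} \<union> (\<lambda>t. N + 2 * int n - int t) ` {..<n} = {N + 1..N + 2 * int n}"
    and "(\<lambda>t. N + 1 + int t) ` {..<n} \<inter> (\<lambda>t. N + 2 * int n - int t) ` {..<n} = {}"
    by (auto simp: image_add_int_lessThan image_diff_int_lessThan)
  then show ?thesis
    using C1.cycle_labelling_bij[of "\<lambda>t. N + 1 + int t" "\<lambda>t. N + 2 * int n - int t"]
    by (simp add: L1_def inj_on_def)
qed

lemma L2_bij: "bij_betw (\<lambda>(i, j). L2 i j) (cycle_cells n r2 c2) {N + 2 * int n + 1..N + 4 * int n}"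
proof -
  have "(\<lambda>t. N + 3 * int n - int t) ` {..<n} \<union> (\<lambda>t. N + 3 * int n + 1 + int t) ` {..<n} =
          {N + 2 * int n + 1..N + 4 * int n}"
    and "(\<lambda>t. N + 3 * int n - int t) ` {..<n} \<inter> (\<lambda>t. N + 3 * int n + 1 + int t) ` {..<n} = {}"
    by (auto simp: image_add_int_lessThan image_diff_int_lessThan)
  then show ?thesis
    using C2.cycle_labelling_bij[of "\<lambda>t. N + 3 * int n - int t" "\<lambda>t. N + 3 * int n + 1 + int t"]
    by (simp add: L2_def inj_on_def)
qed

lemma N_nonneg: "0 \<le> N"
  by (simp add: N_def)

lemma B_gt_N_on_cycles:
  assumes "(i, j) \<in> cycle_cells n r1 c1 \<union> cycle_cells n r2 c2" shows "N < B i j"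
  using assms bij_betwE[OF L1_bij] bij_betwE[OF L2_bij] B_on_cycle1 B_on_cycle2 by fastforce

lemma filled_cells_B:
  "filled_cells n B = filled_cells n A \<union> cycle_cells n r1 c1 \<union> cycle_cells n r2 c2"
proof -
  have "B i j \<noteq> 0 \<longleftrightarrow> A i j \<noteq> 0 \<or> (i, j) \<in> cycle_cells n r1 c1 \<union> cycle_cells n r2 c2"
    if "j < n" for i j
    using that B_gt_N_on_cycles[of i j] N_nonneg A_zero_on_cycles[of i j] B_off_cycles[of j i]
    by (cases "(i, j) \<in> cycle_cells n r1 c1 \<union> cycle_cells n r2 c2") auto
  then show ?thesis
    using C1.cycle_cells_subset C2.cycle_cells_subset by (auto simp: filled_cells_def)
qed


lemma L1_row_sum:
  assumes "i < n"
  shows "(\<Sum>j<n. L1 i j) = (if i = r1 0 then 2 * N + int n + 2 else 2 * N + 2 * int n + 2)"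
proof -
  have "(\<Sum>j<n. L1 i j) =
      (if i = r1 0 then (N + 1 + int 0) + (N + 2 * int n - int (n - 1)) else 2 * N + 2 * int n + 2)"
    unfolding L1_def by (rule C1.cycle_labelling_row_sum) (simp_all add: assms)
  then show ?thesis
    using C1.two_le_n by (simp add: of_nat_diff)
qed

lemma L2_row_sum:
  assumes "i < n"
  shows "(\<Sum>j<n. L2 i j) = (if i = r2 0 then 2 * N + 7 * int n else 2 * N + 6 * int n)"
proof -
  have "(\<Sum>j<n. L2 i j) =
      (if i = r2 0 then (N + 3 * int n - int 0) + (N + 3 * int n + 1 + int (n - 1))
       else 2 * N + 6 * int n)"
    unfolding L2_def by (rule C2.cycle_labelling_row_sum) (simp_all add: assms)
  then show ?thesis
    using C2.two_le_n by (simp add: of_nat_diff)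
qed

lemma L1_col_sum: "j < n \<Longrightarrow> (\<Sum>i<n. L1 i j) = 2 * N + 2 * int n + 1"
  unfolding L1_def by (rule C1.cycle_labelling_col_sum) simp_all

lemma L2_col_sum: "j < n \<Longrightarrow> (\<Sum>i<n. L2 i j) = 2 * N + 6 * int n + 1"
  unfolding L2_def by (rule C2.cycle_labelling_col_sum) simp_all

lemma B_integer_sums: "integer_sums n B (2 * int n * int (k + 4) + 1)"
proof -
  have "(\<Sum>j<n. B i j) = 2 * N + 8 * int n + 1" if "i < n" for i
    using that L1_row_sum L2_row_sum sums_A same_start
    by (simp add: B_def sum.distrib sum_subtractf integer_sums_def N_def)
  moreover have "(\<Sum>i<n. B i j) = 2 * N + 8 * int n + 1" if "j < n" for j
    using that L1_col_sum L2_col_sum sums_A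
    by (simp add: B_def sum.distrib sum_subtractf integer_sums_def N_def)
  ultimately show ?thesis
    by (simp add: integer_sums_def N_def algebra_simps)
qed


lemma B_row_card:
  assumes "i < n" shows "card {j. j < n \<and> B i j \<noteq> 0} = k + 4"
proof -
  let ?row = "\<lambda>X. {j. j < n \<and> (i, j) \<in> X}"
  have "{j. j < n \<and> B i j \<noteq> 0} =
      {j. j < n \<and> A i j \<noteq> 0} \<union> (?row (cycle_cells n r1 c1) \<union> ?row (cycle_cells n r2 c2))"
    using filled_cells_B assms by (auto simp: filled_cells_def set_eq_iff)
  moreover have "{j. j < n \<and> A i j \<noteq> 0} \<inter> (?row (cycle_cells n r1 c1) \<union> ?row (cycle_cells n r2 c2)) = {}"
    and "?row (cycle_cells n r1 c1) \<inter> ?row (cycle_cells n r2 c2) = {}"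
    using A_zero_on_cycles cycles_disjoint by auto
  ultimately show ?thesis
    using heffter_A assms C1.cycle_cells_row_card C2.cycle_cells_row_card
    by (simp add: card_Un_disjoint heffter_def)
qed

lemma B_col_card:
  assumes "j < n" shows "card {i. i < n \<and> B i j \<noteq> 0} = k + 4"
proof -
  let ?col = "\<lambda>X. {i. i < n \<and> (i, j) \<in> X}"
  have "{i. i < n \<and> B i j \<noteq> 0} =
      {i. i < n \<and> A i j \<noteq> 0} \<union> (?col (cycle_cells n r1 c1) \<union> ?col (cycle_cells n r2 c2))"
    using filled_cells_B assms by (auto simp: filled_cells_def set_eq_iff)
  moreover have "{i. i < n \<and> A i j \<noteq> 0} \<inter> (?col (cycle_cells n r1 c1) \<union> ?col (cycle_cells n r2 c2)) = {}"
    and "?col (cycle_cells n r1 c1) \<inter> ?col (cycle_cells n r2 c2) = {}"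
    using A_zero_on_cycles cycles_disjoint by auto
  ultimately show ?thesis
    using heffter_A assms C1.cycle_cells_col_card C2.cycle_cells_col_card
    by (simp add: card_Un_disjoint heffter_def)
qed

lemma B_abs_bij: "bij_betw (\<lambda>(i, j). \<bar>B i j\<bar>) (filled_cells n B) {1..int n * int (k + 4)}"
proof -
  have on_A: "bij_betw (\<lambda>(i, j). \<bar>B i j\<bar>) (filled_cells n A) {1..N}"
  proof -
    have "\<bar>B i j\<bar> = \<bar>A i j\<bar>" if "(i, j) \<in> filled_cells n A" for i j
    proof -
      have "j < n" "(i, j) \<notin> cycle_cells n r1 c1" "(i, j) \<notin> cycle_cells n r2 c2"
        using that cycle1_unfilled cycle2_unfilled by (auto simp: filled_cells_def)
      then show ?thesis
        by (simp add: B_off_cycles)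
    qed
    then have "bij_betw (\<lambda>(i, j). \<bar>B i j\<bar>) (filled_cells n A) {1..N} \<longleftrightarrow>
        bij_betw (\<lambda>(i, j). \<bar>A i j\<bar>) (filled_cells n A) {1..N}"
      by (intro bij_betw_cong) auto
    then show ?thesis
      using heffter_abs_bij[OF heffter_A] by (simp add: N_def)
  qed
  have on_H1: "bij_betw (\<lambda>(i, j). \<bar>B i j\<bar>) (cycle_cells n r1 c1) {N + 1..N + 2 * int n}"
  proof -
    have "\<bar>B i j\<bar> = L1 i j" if "(i, j) \<in> cycle_cells n r1 c1" for i j
      using that B_on_cycle1 B_gt_N_on_cycles[of i j] N_nonneg by simp
    then have "bij_betw (\<lambda>(i, j). \<bar>B i j\<bar>) (cycle_cells n r1 c1) {N + 1..N + 2 * int n} \<longleftrightarrow>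
        bij_betw (\<lambda>(i, j). L1 i j) (cycle_cells n r1 c1) {N + 1..N + 2 * int n}"
      by (intro bij_betw_cong) auto
    then show ?thesis
      using L1_bij by simp
  qed
  have on_H2: "bij_betw (\<lambda>(i, j). \<bar>B i j\<bar>) (cycle_cells n r2 c2) {N + 2 * int n + 1..N + 4 * int n}"
  proof -
    have "\<bar>B i j\<bar> = L2 i j" if "(i, j) \<in> cycle_cells n r2 c2" for i j
      using that B_on_cycle2 B_gt_N_on_cycles[of i j] N_nonneg by simp
    then have "bij_betw (\<lambda>(i, j). \<bar>B i j\<bar>) (cycle_cells n r2 c2) {N + 2 * int n + 1..N + 4 * int n} \<longleftrightarrow>
        bij_betw (\<lambda>(i, j). L2 i j) (cycle_cells n r2 c2) {N + 2 * int n + 1..N + 4 * int n}"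
      by (intro bij_betw_cong) auto
    then show ?thesis
      using L2_bij by simp
  qed
  have "bij_betw (\<lambda>(i, j). \<bar>B i j\<bar>) (filled_cells n A \<union> cycle_cells n r1 c1 \<union> cycle_cells n r2 c2)
      ({1..N} \<union> {N + 1..N + 2 * int n} \<union> {N + 2 * int n + 1..N + 4 * int n})"
    by (rule bij_betw_combine[OF bij_betw_combine[OF on_A on_H1] on_H2]) auto
  moreover have "{1..N} \<union> {N + 1..N + 2 * int n} \<union> {N + 2 * int n + 1..N + 4 * int n} =
      {1..N + 4 * int n}"
    using N_nonneg by auto
  moreover have "N + 4 * int n = int n * int (k + 4)"
    by (simp add: N_def distrib_left)
  ultimately show ?thesis
    by (simp add: filled_cells_B)
qed

lemma heffter_B: "heffter n (k + 4) B"
  using B_row_card B_col_card B_integer_sums B_abs_bij by (rule heffterI)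

end

theorem theorem2p2:
  fixes n k :: nat and A :: "nat \<Rightarrow> nat \<Rightarrow> int" and H1 H2 :: "(nat \<times> nat) set"
  assumes "heffter n k A"
    and "integer_sums n A (2 * int n * int k + 1)"
    and "hamilton_cycle n H1" and "hamilton_cycle n H2"
    and "H1 \<inter> H2 = {}"
    and "H1 \<inter> filled_cells n A = {}" and "H2 \<inter> filled_cells n A = {}"
  shows "\<exists>B :: nat \<Rightarrow> nat \<Rightarrow> int. heffter n (k + 4) B \<and>
           integer_sums n B (2 * int n * int (k + 4) + 1) \<and>
           filled_cells n B = filled_cells n A \<union> H1 \<union> H2"
proof (cases "n = 0")
  case True
  then have "H1 = {}" "H2 = {}"
    using assms(3,4) by (simp_all add: hamilton_cycle_iff_cycle_cells cycle_cells_def)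
  with True show ?thesis
    by (intro exI[of _ A]) (simp add: heffter_def integer_sums_def filled_cells_def)
next
  case False
  obtain r1 c1 where "cycle_param n r1 c1" "H1 = cycle_cells n r1 c1" "r1 0 = 0"
    using hamilton_cycleE[OF assms(3)] False by blast
  moreover obtain r2 c2 where "cycle_param n r2 c2" "H2 = cycle_cells n r2 c2" "r2 0 = 0"
    using hamilton_cycleE[OF assms(4)] False by blast
  ultimately interpret heffter_extension n r1 c1 r2 c2 k A
    using assms by (simp add: heffter_extension_def heffter_extension_axioms_def)
  show ?thesis
    using heffter_B B_integer_sums filled_cells_B \<open>H1 = _\<close> \<open>H2 = _\<close> by blast
qed

end
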